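(* Let $\alpha\in\mathbb C\setminus[0,\infty)$ with $\mathrm{Re}(\alpha)>0$, and let $s\in\mathbb C$ with $\mathrm{Re}(s)>1$ and $\mathrm{Re}(s)>\mathrm{Re}(\alpha)$. Then $\Phi_\alpha(x)/x^{s+1}$ is Lebesgue integrable on $(1,\infty)$ and $$1-\frac s\alpha=\exp\left[-s(s-1)\int_1^\infty\frac{\Phi_\alpha(x)}{x^{s+1}}\,dx\right].$$
   Context: $\gamma$ is Euler's constant, $\log$ denotes the principal branch on $\mathbb C\setminus(-\infty,0]$, $\mathrm{Ei}_0(z):=\sum_{k\ge1}\frac{z^k}{k\cdot k!}$ (entire), and for $\alpha\in\mathbb C\setminus[0,\infty)$ and $x>1$, $$\varphi_\alpha(x):=\gamma+\log(\log x)+\log(-\alpha)+\mathrm{Ei}_0(\alpha\log x),\qquad \Phi_\alpha(x):=x\int_1^x\frac{\varphi_\alpha(y)}{y^2}\,dy.$$ *)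

theory Defs
  imports "HOL-Analysis.Analysis"
begin

definition Ei0 :: "complex \<Rightarrow> complex" where
  "Ei0 z = (\<Sum>k. z ^ Suc k / (of_nat (Suc k) * fact (Suc k)))"

definition phi :: "complex \<Rightarrow> real \<Rightarrow> complex" where
  "phi \<alpha> x = euler_mascheroni + Ln (complex_of_real (ln x)) + Ln (- \<alpha>)
               + Ei0 (\<alpha> * complex_of_real (ln x))"

definition Phi :: "complex \<Rightarrow> real \<Rightarrow> complex" where
  "Phi \<alpha> x = complex_of_real x * (LBINT y:{1<..x}. phi \<alpha> y / complex_of_real (y ^ 2))"

end

theory Submission
  imports Defs "HOL-Real_Asymp.Real_Asymp"
begin

text \<open>
  On the slit plane the function \<open>\<phi>\<^sub>\<alpha>\<close> extends holomorphically to
  \<open>\<phi>(z) = \<gamma> + Ln (Ln z) + Ln (-\<alpha>) + Ei0 (\<alpha> Ln z)\<close>, and both integrals of the statement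
  have closed-form antiderivatives built from \<open>Ei0\<close>:
    \<open>Q(z) = -\<phi>(z)/z + Ln (Ln z) + Ei0 ((\<alpha>-1) Ln z)\<close> satisfies \<open>Q' = \<phi>/z\<^sup>2\<close>, and
    \<open>H(z) = ((Q(z) - Q(1\<^sup>+)) z^(1-s) - P(z)) / (1-s)\<close> satisfies \<open>H' = (Q - Q(1\<^sup>+)) z^(-s)\<close>,
  where \<open>P(z) = -(\<phi>(z) z^(-s) + E(z))/s\<close> and \<open>E(z) = -\<gamma> - Ln (s-\<alpha>) - Ln (Ln z) - Ei0 ((\<alpha>-s) Ln z)\<close>.
  Hence \<open>\<Phi>\<^sub>\<alpha>(x) = x (Q(x) - Q(1\<^sup>+))\<close>, and the integral in question is \<open>H(\<infinity>) - H(1\<^sup>+)\<close>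
  \<open>= (Ln (s-\<alpha>) - Ln (-\<alpha>)) / (s (1-s))\<close>, which exponentiates to \<open>1 - s/\<alpha>\<close>.
\<close>

section \<open>The entire function Ei0\<close>

text \<open>The entire function \<open>exprel z = (e\<^sup>z - 1)/z\<close>, the derivative of \<open>Ei0\<close>.\<close>
definition exprel :: "complex \<Rightarrow> complex" where
  "exprel z = (\<Sum>n. z ^ n / fact (Suc n))"

text \<open>Termwise comparison with the exponential series gives convergence of \<open>exprel\<close> and
  the bound \<open>|exprel z| \<le> e^|z|\<close>.\<close>
lemma exp_real_sums: "(\<lambda>n. x ^ n / fact n) sums exp (x::real)"
  using exp_converges[of x] by (simp add: divide_inverse mult.commute scaleR_conv_of_real)

lemma norm_exprel_term_le: "norm (z ^ n / fact (Suc n) :: complex) \<le> norm z ^ n / fact n"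
proof -
  have "inverse (fact (Suc n)) \<le> (inverse (fact n) :: real)"
    by (intro le_imp_inverse_le) (auto simp: fact_ge_1)
  from mult_left_mono[OF this, of "norm z ^ n"] show ?thesis
    by (simp add: norm_mult norm_inverse norm_power divide_inverse del: fact_Suc)
qed

lemma summable_exprel: "summable (\<lambda>n. z ^ n / fact (Suc n) :: complex)"
  by (rule summable_comparison_test'[OF sums_summable[OF exp_real_sums]]) (rule norm_exprel_term_le)

lemma exprel_mult: "z * exprel z = exp z - 1"
proof -
  have "(\<lambda>n. z ^ Suc n /\<^sub>R fact (Suc n)) sums (exp z - z ^ 0 /\<^sub>R fact 0)"
    using sums_Suc_iff[of "\<lambda>n. z ^ n /\<^sub>R fact n"] exp_converges[of z] by simp
  moreover have "(\<lambda>n. z ^ Suc n /\<^sub>R fact (Suc n)) = (\<lambda>n. z * (z ^ n / fact (Suc n)))"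
    by (simp add: scaleR_conv_of_real divide_inverse mult_ac)
  moreover have "(\<lambda>n. z * (z ^ n / fact (Suc n))) sums (z * exprel z)"
    unfolding exprel_def by (intro sums_mult summable_sums summable_exprel)
  ultimately show ?thesis using sums_unique2 by fastforce
qed

lemma exprel_eq: "z \<noteq> 0 \<Longrightarrow> exprel z = (exp z - 1) / z"
  using exprel_mult[of z] by (simp add: eq_divide_eq mult.commute)

lemma norm_exprel_le: "norm (exprel z) \<le> exp (norm z)"
proof -
  have "norm (exprel z) \<le> (\<Sum>n. norm z ^ n / fact n)"
    unfolding exprel_def
    by (rule norm_suminf_le[OF norm_exprel_term_le sums_summable[OF exp_real_sums]])
  also have "\<dots> = exp (norm z)" using exp_real_sums sums_unique by metis
  finally show ?thesis .
qed

lemma norm_exp_minus_one_le: "norm (exp z - 1) \<le> norm z * exp (norm z)" for z :: complex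
proof -
  have "norm (exp z - 1) = norm z * norm (exprel z)" by (simp flip: exprel_mult add: norm_mult)
  also have "\<dots> \<le> norm z * exp (norm z)" by (intro mult_left_mono norm_exprel_le) auto
  finally show ?thesis .
qed

text \<open>\<open>Ei0\<close> written as a standard power series \<open>\<Sum> c\<^sub>n z\<^sup>n\<close>, so that termwise differentiation applies.\<close>
definition Ei0_coeff :: "nat \<Rightarrow> complex" where
  "Ei0_coeff n = (if n = 0 then 0 else inverse (of_nat n * fact n))"

lemma summable_Ei0_series: "summable (\<lambda>n. Ei0_coeff n * z ^ n)"
proof (rule summable_comparison_test'[OF sums_summable[OF exp_real_sums[of "norm z"]]])
  fix n :: nat
  show "norm (Ei0_coeff n * z ^ n) \<le> norm z ^ n / fact n"
  proof (cases "n = 0")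
    case False
    have "norm (Ei0_coeff n) = inverse (real n * fact n)"
      using False by (simp add: Ei0_coeff_def norm_mult norm_inverse)
    also have "\<dots> \<le> inverse (fact n)"
      using False by (intro le_imp_inverse_le) (auto simp: fact_ge_1)
    finally have "norm (Ei0_coeff n) \<le> inverse (fact n)" .
    from mult_right_mono[OF this, of "norm z ^ n"] show ?thesis
      by (simp add: norm_mult norm_power divide_inverse mult.commute)
  qed (simp add: Ei0_coeff_def)
qed

lemma Ei0_power_series: "Ei0 z = (\<Sum>n. Ei0_coeff n * z ^ n)"
proof -
  have "(\<Sum>n. Ei0_coeff (Suc n) * z ^ Suc n) = (\<Sum>n. Ei0_coeff n * z ^ n) - Ei0_coeff 0 * z ^ 0"
    by (rule suminf_split_head[OF summable_Ei0_series])
  moreover have "(\<lambda>n. Ei0_coeff (Suc n) * z ^ Suc n) = (\<lambda>n. z ^ Suc n / (of_nat (Suc n) * fact (Suc n)))"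
    by (simp add: Ei0_coeff_def divide_inverse mult.commute)
  ultimately show ?thesis by (simp add: Ei0_def Ei0_coeff_def)
qed

lemma diffs_Ei0_coeff: "diffs Ei0_coeff = (\<lambda>n. inverse (fact (Suc n)))"
  by (rule ext) (simp add: diffs_def Ei0_coeff_def field_simps del: of_nat_Suc fact_Suc)

lemma Ei0_has_field_derivative: "(Ei0 has_field_derivative exprel z) (at z)"
proof -
  have "((\<lambda>z. \<Sum>n. Ei0_coeff n * z ^ n) has_field_derivative (\<Sum>n. diffs Ei0_coeff n * z ^ n)) (at z)"
    by (rule termdiffs_strong_converges_everywhere[OF summable_Ei0_series])
  moreover have "(\<Sum>n. diffs Ei0_coeff n * z ^ n) = exprel z"
    by (simp add: exprel_def diffs_Ei0_coeff divide_inverse mult.commute)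
  ultimately show ?thesis by (simp add: Ei0_power_series[abs_def])
qed

lemma Ei0_has_field_derivative_chain [derivative_intros]:
  "(f has_field_derivative f') (at x within S) \<Longrightarrow>
   ((\<lambda>x. Ei0 (f x)) has_field_derivative exprel (f x) * f') (at x within S)"
  using DERIV_chain2[OF Ei0_has_field_derivative] by blast

lemma isCont_Ei0 [continuous_intros]: "isCont f x \<Longrightarrow> isCont (\<lambda>x. Ei0 (f x)) x"
  by (rule isCont_o2[OF _ DERIV_isCont[OF Ei0_has_field_derivative]])

lemma continuous_on_Ei0 [continuous_intros]: "continuous_on S f \<Longrightarrow> continuous_on S (\<lambda>x. Ei0 (f x))"
  by (rule continuous_on_compose2[OF DERIV_continuous_on[OF Ei0_has_field_derivative]]) auto

lemma tendsto_Ei0 [tendsto_intros]: "(f \<longlongrightarrow> a) F \<Longrightarrow> ((\<lambda>x. Ei0 (f x)) \<longlongrightarrow> Ei0 a) F"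
  by (rule isCont_tendsto_compose[OF DERIV_isCont[OF Ei0_has_field_derivative]])

lemma Ei0_0 [simp]: "Ei0 0 = 0"
  by (simp add: Ei0_def)

text \<open>Since \<open>(Ei0(z t))' = (e^(z t) - 1)/t\<close>, this follows from bounding the derivative.\<close>
definition Ei0_ray_const :: "complex \<Rightarrow> real \<Rightarrow> real" where
  "Ei0_ray_const z c = max (norm z * exp (norm z)) 2 / c"

lemma Ei0_ray_const_nonneg: "c > 0 \<Longrightarrow> Ei0_ray_const z c \<ge> 0"
  by (simp add: Ei0_ray_const_def)

text \<open>For \<open>u \<le> 1\<close> the derivative is bounded by \<open>|z| e^|z|\<close>, for \<open>u \<ge> 1\<close> by \<open>2 e^(c u)\<close>.\<close>
lemma norm_Ei0_ray_derivative_le: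
  assumes c: "c > 0" "Re z \<le> c" and u: "u \<ge> 0"
  shows "norm (exprel (z * of_real u) * z) \<le> max (norm z * exp (norm z)) 2 * exp (c * u)"
proof (cases "u \<le> 1")
  case True
  have "norm (exprel (z * of_real u) * z) \<le> exp (norm (z * of_real u)) * norm z"
    using mult_right_mono[OF norm_exprel_le[of "z * of_real u"], of "norm z"] by (simp add: norm_mult)
  also have "\<dots> \<le> exp (norm z) * norm z"
    using True u by (intro mult_right_mono) (auto simp: norm_mult intro!: mult_left_le)
  also have "\<dots> \<le> max (norm z * exp (norm z)) 2 * 1" by (simp add: mult.commute)
  also have "\<dots> \<le> max (norm z * exp (norm z)) 2 * exp (c * u)"
    using c u by (intro mult_left_mono) auto
  finally show ?thesis .
next
  case False
  have eq: "exprel (z * of_real u) * z = (exp (z * of_real u) - 1) / of_real u"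
    using exprel_mult[of "z * of_real u"] False by (auto simp: field_simps)
  have "norm (exp (z * of_real u) - 1) \<le> exp (Re z * u) + 1"
    using norm_triangle_ineq4[of "exp (z * of_real u)" 1] by (simp add: norm_exp_eq_Re)
  also have "\<dots> \<le> 2 * exp (c * u)"
  proof -
    have "exp (Re z * u) \<le> exp (c * u)" using c u by (simp add: mult_right_mono)
    moreover have "1 \<le> exp (c * u)" using c u by simp
    ultimately show ?thesis by linarith
  qed
  finally have "norm (exprel (z * of_real u) * z) \<le> 2 * exp (c * u) / u"
    using False by (simp add: eq norm_divide divide_right_mono)
  also have "\<dots> \<le> 2 * exp (c * u)" using False by (simp add: field_simps)
  also have "\<dots> \<le> max (norm z * exp (norm z)) 2 * exp (c * u)" by (intro mult_right_mono) auto
  finally show ?thesis .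
qed

lemma norm_Ei0_ray_le:
  assumes c: "c > 0" "Re z \<le> c" and t: "t \<ge> 0"
  shows "norm (Ei0 (z * of_real t)) \<le> Ei0_ray_const z c * exp (c * t)"
proof (cases "t = 0")
  case False
  define M where "M = max (norm z * exp (norm z)) 2"
  have "norm (Ei0 (z * of_real t) - Ei0 (z * of_real 0)) \<le> M / c * exp (c * t) - M / c * exp (c * 0)"
  proof (rule differentiable_bound_general)
    show "0 < t" using t False by simp
    show "continuous_on {0..t} (\<lambda>u. Ei0 (z * of_real u))"
      by (intro continuous_intros)
    show "continuous_on {0..t} (\<lambda>u. M / c * exp (c * u))"
      by (intro continuous_intros)
    fix u assume u: "0 < u" "u < t"
    show "((\<lambda>u. Ei0 (z * of_real u)) has_vector_derivative exprel (z * of_real u) * z) (at u)"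
      by (rule has_vector_derivative_real_field) (auto intro!: derivative_eq_intros)
    show "((\<lambda>u. M / c * exp (c * u)) has_vector_derivative M * exp (c * u)) (at u)"
      unfolding has_real_derivative_iff_has_vector_derivative[symmetric]
      using c by (auto intro!: derivative_eq_intros)
    show "norm (exprel (z * of_real u) * z) \<le> M * exp (c * u)"
      unfolding M_def using norm_Ei0_ray_derivative_le[OF c] u by simp
  qed
  also have "\<dots> \<le> M / c * exp (c * t)" using c by (simp add: M_def)
  finally show ?thesis by (simp add: Ei0_ray_const_def M_def)
qed (use c in \<open>simp add: Ei0_ray_const_def\<close>)


section \<open>Asymptotics of Ei0 on the left half-plane\<close>

text \<open>For \<open>t > 0\<close>, \<open>-Ei0(-t) = Ein(t)\<close> is the integral of \<open>(1 - e^(-t u))/u\<close> over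
  \<open>(0,1)\<close>, while \<open>harm n\<close> is the integral of \<open>(1 - (1-u)^n)/u\<close> over \<open>(0,1)\<close>.  Comparing the
  integrands shows that \<open>-Ei0(-n)\<close> and \<open>harm n\<close> differ by \<open>O(1/n)\<close>; together with
  \<open>harm n = ln n + \<gamma> + o(1)\<close> this gives the classical \<open>Ein(t) = \<gamma> + ln t + o(1)\<close>.\<close>

lemma power_diff_le_mean_value:
  fixes a b :: real
  assumes "0 \<le> b" "b \<le> a"
  shows "a ^ n - b ^ n \<le> real n * a ^ (n - 1) * (a - b)"
proof (induction n)
  case (Suc n)
  have "a ^ Suc n - b ^ Suc n = a * (a ^ n - b ^ n) + b ^ n * (a - b)" by (simp add: algebra_simps)
  also have "\<dots> \<le> a * (real n * a ^ (n - 1) * (a - b)) + a ^ n * (a - b)"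
    using assms Suc by (intro add_mono mult_left_mono mult_right_mono power_mono) auto
  also have "\<dots> = real (Suc n) * a ^ n * (a - b)"
    by (cases n) (simp_all add: algebra_simps)
  finally show ?case by simp
qed simp

lemma exp_minus_le_quadratic:
  assumes "(u::real) \<ge> 0"
  shows "exp (-u) \<le> 1 - u + u^2/2"
proof -
  define k where "k v = 1 - v + v^2/2 - exp (-v)" for v :: real
  have "k 0 \<le> k u"
  proof (rule DERIV_nonneg_imp_nondecreasing[OF assms])
    fix v :: real assume v: "0 \<le> v" "v \<le> u"
    show "\<exists>y. (k has_real_derivative y) (at v) \<and> 0 \<le> y"
      unfolding k_def
      using exp_ge_add_one_self[of "-v"]
      by (intro exI[of _ "-1 + v + exp (-v)"]) (auto intro!: derivative_eq_intros simp: algebra_simps)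
  qed
  then show ?thesis by (simp add: k_def)
qed

text \<open>Pointwise comparison of the two integrands \<open>(1 - e^(-n u))/u = n exprel(-n u)\<close> and
  \<open>(1 - (1-u)^n)/u = (\<Sum>k<n. (1-u)^k)\<close>.\<close>
lemma Ein_harm_integrand_gap:
  assumes n: "n \<ge> 1" and u: "0 < u" "u < 1"
  shows "norm (of_nat n * exprel (- of_nat n * of_real u) - of_real (\<Sum>k<n. (1-u)^k))
           \<le> real n / 2 * u * exp (- (real n - 1) * u)"
proof -
  define a where "a = exp (-u)"
  define b where "b = 1 - u"
  have ab: "0 \<le> b" "b \<le> a" using u exp_ge_add_one_self[of "-u"] by (auto simp: a_def b_def)
  have an: "a ^ n = exp (- real n * u)" by (simp add: a_def flip: exp_of_nat_mult)
  have an1: "a ^ (n - 1) = exp (- (real n - 1) * u)"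
    using n by (simp add: a_def algebra_simps flip: exp_of_nat_mult)
  have exprel_eq': "of_nat n * exprel (- of_nat n * of_real u) = of_real ((1 - a ^ n) / u)"
  proof -
    have "(- of_nat n * of_real u) * exprel (- of_nat n * of_real u) = exp (- of_nat n * of_real u) - 1"
      by (rule exprel_mult)
    also have "exp (- of_nat n * of_real u) = (of_real (a ^ n) :: complex)"
      by (simp add: an flip: exp_of_real)
    finally show ?thesis using u by (simp add: field_simps)
  qed
  have geo: "(\<Sum>k<n. (1-u)^k) = (1 - b ^ n) / u"
    using u by (subst geometric_sum) (auto simp: field_simps b_def)
  have "a ^ n - b ^ n \<le> real n * a ^ (n - 1) * (a - b)" by (rule power_diff_le_mean_value[OF ab])
  also have "\<dots> \<le> real n * a ^ (n - 1) * (u^2/2)"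
    using exp_minus_le_quadratic[of u] u by (intro mult_left_mono) (auto simp: a_def b_def)
  finally have main: "a ^ n - b ^ n \<le> real n * a ^ (n - 1) * (u^2/2)" .
  have "b ^ n \<le> a ^ n" using ab by (intro power_mono) auto
  moreover have "(1 - a ^ n) / u - (1 - b ^ n) / u = - ((a ^ n - b ^ n) / u)"
    using u by (simp add: field_simps)
  ultimately have "norm (of_nat n * exprel (- of_nat n * of_real u) - of_real (\<Sum>k<n. (1-u)^k))
        = (a ^ n - b ^ n) / u"
    unfolding exprel_eq' geo of_real_diff[symmetric] norm_of_real using u by simp
  also have "\<dots> \<le> real n * a ^ (n - 1) * (u^2/2) / u" using main u by (intro divide_right_mono) auto
  also have "\<dots> = real n / 2 * u * exp (- (real n - 1) * u)"
    using u by (simp only: an1) (simp add: power2_eq_square field_simps)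
  finally show ?thesis .
qed

text \<open>Integrating the preceding gap over \<open>(0,1)\<close>: \<open>|Ein(n) - harm n| \<le> n / (2 (n-1)^2)\<close>.\<close>
lemma Ei0_neg_nat_harm_bound:
  assumes n: "n \<ge> 2"
  shows "norm (- Ei0 (- of_nat n) - of_real (harm n)) \<le> real n / (2 * (real n - 1)^2)"
proof -
  define m where "m = real n - 1"
  have m: "m \<ge> 1" using n by (simp add: m_def)
  text \<open>\<open>S\<close> and \<open>F\<close> are the integrals over \<open>(0,u)\<close> of the two integrands and of their
    difference; \<open>B\<close> is a primitive of the bound of the preceding lemma.\<close>
  define S where "S u = (\<Sum>k<n. (1 - (1-u)^(Suc k)) / real (Suc k))" for u :: real
  define F where "F u = - Ei0 (- of_nat n * of_real u) - of_real (S u)" for u :: real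
  define B where "B u = - (real n / 2) * (u / m + 1 / m^2) * exp (- m * u)" for u :: real
  have term_eq: "(real k * x ^ (k - Suc 0) * x + x ^ k) / real (Suc k) = x ^ k" for k and x :: real
  proof (cases k)
    case (Suc j)
    then have "real k * x ^ (k - Suc 0) * x + x ^ k = real (Suc k) * x ^ k"
      by (simp add: algebra_simps)
    then show ?thesis by (simp del: of_nat_Suc)
  qed simp
  have dS: "(S has_real_derivative (\<Sum>k<n. (1-u)^k)) (at u)" for u
    unfolding S_def by (auto intro!: derivative_eq_intros simp: term_eq simp del: of_nat_Suc)
  have "norm (F 1 - F 0) \<le> B 1 - B 0"
  proof (rule differentiable_bound_general[of 0 1])
    show "continuous_on {0..1} F" unfolding F_def S_def by (intro continuous_intros) simp
    show "continuous_on {0..1} B" unfolding B_def using m by (intro continuous_intros) auto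
    fix u :: real assume u: "0 < u" "u < 1"
    have d1: "((\<lambda>u. - Ei0 (- of_nat n * of_real u)) has_vector_derivative
                (of_nat n * exprel (- of_nat n * of_real u))) (at u)"
      by (rule has_vector_derivative_real_field) (auto intro!: derivative_eq_intros)
    show "(F has_vector_derivative
            (of_nat n * exprel (- of_nat n * of_real u) - of_real (\<Sum>k<n. (1-u)^k))) (at u)"
      unfolding F_def by (rule has_vector_derivative_diff[OF d1 has_vector_derivative_of_real[OF dS]])
    show "(B has_vector_derivative (real n / 2) * u * exp (- m * u)) (at u)"
      unfolding has_real_derivative_iff_has_vector_derivative[symmetric] B_def
      using m by (auto intro!: derivative_eq_intros simp: field_simps power2_eq_square)
    show "norm (of_nat n * exprel (- of_nat n * of_real u) - of_real (\<Sum>k<n. (1-u)^k))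
            \<le> real n / 2 * u * exp (- m * u)"
      using Ein_harm_integrand_gap[of n u] n u by (simp add: m_def)
  qed simp
  also have "B 1 - B 0 \<le> real n / (2 * m^2)"
    using m by (simp add: B_def field_simps)
  finally have "norm (F 1 - F 0) \<le> real n / (2 * m^2)" .
  moreover have "S 1 = harm n" "S 0 = 0" by (simp_all add: S_def harm_altdef divide_inverse)
  ultimately show ?thesis by (simp add: F_def m_def)
qed

lemma Ei0_neg_nat_asymptotics:
  "(\<lambda>n. - euler_mascheroni - of_real (ln (real n)) - Ei0 (- of_nat n) :: complex) \<longlonglongrightarrow> 0"
proof -
  have harm: "(\<lambda>n. of_real (harm n - ln (real n) - euler_mascheroni) :: complex) \<longlonglongrightarrow> 0"
    using tendsto_of_real[where 'a=complex,
        OF tendsto_diff[OF euler_mascheroni_LIMSEQ tendsto_const[of euler_mascheroni]]]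
    by simp
  have gap: "(\<lambda>n. - Ei0 (- of_nat n) - of_real (harm n) :: complex) \<longlonglongrightarrow> 0"
  proof (rule Lim_null_comparison)
    show "eventually (\<lambda>n. norm (- Ei0 (- of_nat n) - of_real (harm n) :: complex)
            \<le> real n / (2 * (real n - 1)^2)) sequentially"
      using eventually_ge_at_top[of 2] by eventually_elim (rule Ei0_neg_nat_harm_bound)
    show "(\<lambda>n. real n / (2 * (real n - 1)^2)) \<longlonglongrightarrow> 0" by real_asymp
  qed
  have "(\<lambda>n. of_real (harm n - ln (real n) - euler_mascheroni)
             + (- Ei0 (- of_nat n) - of_real (harm n)) :: complex) \<longlonglongrightarrow> 0"
    using tendsto_add_zero[OF harm gap] .
  moreover have "(\<lambda>n. of_real (harm n - ln (real n) - euler_mascheroni)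
             + (- Ei0 (- of_nat n) - of_real (harm n)) :: complex)
     = (\<lambda>n. - euler_mascheroni - of_real (ln (real n)) - Ei0 (- of_nat n))"
    by (rule ext) (simp only: of_real_diff of_real_euler_mascheroni, algebra)
  ultimately show ?thesis by simp
qed

text \<open>For \<open>t > 0\<close> this is the exponential integral \<open>E\<^sub>1(t)\<close>, the integral of \<open>e^(-u)/u\<close>
  over \<open>(t,\<infinity>)\<close>; its derivative is \<open>-e^(-t)/t\<close>, which lets us pass from integer to real arguments.\<close>
definition E1 :: "real \<Rightarrow> complex" where
  "E1 t = - euler_mascheroni - Ln (of_real t) - Ei0 (- of_real t)"

text \<open>\<open>|E\<^sub>1'(u)| = e^(-u)/u \<le> e^(-u)\<close> for \<open>u \<ge> 1\<close>, so \<open>E\<^sub>1\<close> varies little between \<open>\<lfloor>t\<rfloor>\<close> and \<open>t\<close>.\<close>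
lemma E1_increment_bound:
  assumes t: "1 \<le> a" "a \<le> t"
  shows "norm (E1 t - E1 a) \<le> exp (- a) - exp (- t)"
proof (cases "a = t")
  case False
  have "norm (E1 t - E1 a) \<le> (- exp (- t)) - (- exp (- a))"
  proof (rule differentiable_bound_general)
    show "a < t" using t False by simp
    show "continuous_on {a..t} E1"
      unfolding E1_def using t by (intro continuous_intros) (auto simp: complex_nonpos_Reals_iff)
    show "continuous_on {a..t} (\<lambda>u. - exp (- u))" by (intro continuous_intros)
    fix u assume u: "a < u" "u < t"
    have upos: "u > 0" using u t by auto
    show "(E1 has_vector_derivative (- inverse (of_real u) + exprel (- of_real u))) (at u)"
      unfolding E1_def
      by (rule has_vector_derivative_real_field)
         (use upos in \<open>auto intro!: derivative_eq_intros simp: complex_nonpos_Reals_iff\<close>)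
    show "((\<lambda>u. - exp (- u)) has_vector_derivative exp (- u)) (at u)"
      unfolding has_real_derivative_iff_has_vector_derivative[symmetric]
      by (auto intro!: derivative_eq_intros)
    have "- inverse (of_real u) + exprel (- of_real u) = (of_real (- exp (-u) / u) :: complex)"
      using upos by (simp add: exprel_eq field_simps flip: exp_of_real)
    hence "norm (- inverse (of_real u) + exprel (- of_real u)) = exp (-u) / u"
      using upos by (simp only: norm_of_real) simp
    also have "\<dots> \<le> exp (-u)" using u t by (simp add: divide_le_eq)
    finally show "norm (- inverse (of_real u) + exprel (- of_real u)) \<le> exp (- u)" .
  qed
  then show ?thesis by simp
qed simp

lemma E1_tendsto_zero: "(E1 \<longlongrightarrow> 0) at_top"
proof (rule Lim_null_comparison)
  have seq: "(\<lambda>n. E1 (real n)) \<longlonglongrightarrow> 0"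
  proof -
    have "eventually (\<lambda>n. E1 (real n) = - euler_mascheroni - of_real (ln (real n)) - Ei0 (- of_nat n))
            sequentially"
      using eventually_ge_at_top[of 1] by eventually_elim (simp add: E1_def Ln_of_real)
    then show ?thesis by (subst tendsto_cong[OF \<open>eventually _ _\<close>]) (rule Ei0_neg_nat_asymptotics)
  qed
  have floor: "filterlim (\<lambda>t. nat \<lfloor>t\<rfloor>) sequentially (at_top :: real filter)"
    by (rule filterlim_compose[OF filterlim_nat_sequentially filterlim_floor_sequentially])
  have "((\<lambda>t. norm (E1 (real (nat \<lfloor>t\<rfloor>))) + exp (1 - t)) \<longlongrightarrow> 0 + 0) at_top"
    by (intro tendsto_add tendsto_norm_zero filterlim_compose[OF seq floor]) real_asymp
  then show "((\<lambda>t. norm (E1 (real (nat \<lfloor>t\<rfloor>))) + exp (1 - t)) \<longlongrightarrow> 0) at_top" by simp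
  show "eventually (\<lambda>t. norm (E1 t) \<le> norm (E1 (real (nat \<lfloor>t\<rfloor>))) + exp (1 - t)) at_top"
    using eventually_ge_at_top[of "1::real"]
  proof eventually_elim
    case (elim t)
    define n where "n = nat \<lfloor>t\<rfloor>"
    have n: "1 \<le> real n" "real n \<le> t" "t < real n + 1" using elim by (auto simp: n_def)
    have "norm (E1 t) \<le> norm (E1 (real n)) + norm (E1 t - E1 (real n))"
      by (metis add.commute norm_triangle_sub)
    also have "norm (E1 t - E1 (real n)) \<le> exp (- real n) - exp (- t)"
      by (rule E1_increment_bound[OF n(1,2)])
    also have "\<dots> \<le> exp (1 - t)"
      using n by (smt (verit) exp_gt_zero exp_less_cancel_iff)
    finally show ?case by (simp add: n_def)
  qed
qed

text \<open>Passage to complex arguments: rotating \<open>t\<close> to \<open>w t\<close> with \<open>Re w > 0\<close> changes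
  \<open>Ei0(-t)\<close> by \<open>-Ln w + O(e^(-m t))\<close>, as one sees by differentiating along the segment from 1
  to \<open>w\<close>, where the real part stays above \<open>m = min 1 (Re w)\<close>.\<close>
lemma Re_segment_ge:
  assumes "Re w > 0" "0 \<le> \<tau>" "\<tau> \<le> 1"
  shows "Re (1 + of_real \<tau> * (w - 1)) \<ge> min 1 (Re w)"
proof (cases "Re w \<ge> 1")
  case True
  then show ?thesis using assms by (simp add: mult_nonneg_nonneg)
next
  case False
  have "\<tau> * (1 - Re w) \<le> 1 * (1 - Re w)" using False assms by (intro mult_right_mono) auto
  then show ?thesis using False by (simp add: algebra_simps)
qed

text \<open>The derivative of \<open>Ln z + Ei0(-z t)\<close> in the direction \<open>v\<close> equals \<open>v e^(-z t)/z\<close>.\<close>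
lemma norm_Ei0_rotation_derivative_le:
  assumes z: "Re z \<ge> m" and m: "m > 0" and t: "t > 0"
  shows "norm (inverse z * v + exprel (- z * of_real t) * (- v * of_real t)) \<le> norm v * exp (- t * m) / m"
proof -
  have z0: "z \<noteq> 0" using z m by auto
  have "inverse z * v + exprel (- z * of_real t) * (- v * of_real t) = v * exp (- z * of_real t) / z"
    using z0 t by (simp add: exprel_eq field_simps)
  also have "norm \<dots> = norm v * exp (- t * Re z) / norm z"
    by (simp add: norm_mult norm_divide norm_exp_eq_Re mult.commute)
  also have "\<dots> \<le> norm v * exp (- t * m) / m"
  proof (intro frac_le mult_left_mono)
    show "exp (- t * Re z) \<le> exp (- t * m)" using z t by simp
    show "m \<le> norm z" using z complex_Re_le_cmod[of z] by linarith
  qed (use m in auto)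
  finally show ?thesis .
qed

lemma Ei0_rotation_bound:
  assumes w: "Re w > 0" and t: "t > 0"
  shows "norm (Ln w + Ei0 (- w * of_real t) - Ei0 (- of_real t))
           \<le> norm (w - 1) * exp (- t * min 1 (Re w)) / min 1 (Re w)"
proof -
  define m where "m = min 1 (Re w)"
  have m: "m > 0" using w by (simp add: m_def)
  define z where "z \<tau> = 1 + of_real \<tau> * (w - 1)" for \<tau> :: real
  define K where "K = norm (w - 1) * exp (- t * m) / m"
  define f where "f \<tau> = Ln (z \<tau>) + Ei0 (- z \<tau> * of_real t)" for \<tau>
  have Re_z: "Re (z \<tau>) \<ge> m" if "0 \<le> \<tau>" "\<tau> \<le> 1" for \<tau>
    using Re_segment_ge[OF w that] by (simp add: z_def m_def)
  have "norm (f 1 - f 0) \<le> 1 * K - 0 * K"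
  proof (rule differentiable_bound_general[of 0 1])
    show "continuous_on {0..1} f"
      unfolding f_def z_def
      by (intro continuous_intros)
         (use Re_z m in \<open>auto simp: z_def complex_nonpos_Reals_iff\<close>, fastforce)
    show "continuous_on {0..1} (\<lambda>\<tau>. \<tau> * K)" by (intro continuous_intros)
    fix \<tau> :: real assume \<tau>: "0 < \<tau>" "\<tau> < 1"
    have Rz: "Re (z \<tau>) \<ge> m" using Re_z \<tau> by auto
    have z0: "z \<tau> \<noteq> 0" using Rz m by auto
    show "(f has_vector_derivative
            (inverse (z \<tau>) * (w - 1) + exprel (- z \<tau> * of_real t) * (- (w - 1) * of_real t))) (at \<tau>)"
      unfolding f_def z_def
      by (rule has_vector_derivative_real_field)
         (use Rz m z0 t in \<open>auto intro!: derivative_eq_intros simp: z_def complex_nonpos_Reals_iff\<close>)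
    show "((\<lambda>\<tau>. \<tau> * K) has_vector_derivative K) (at \<tau>)"
      unfolding has_real_derivative_iff_has_vector_derivative[symmetric]
      by (auto intro!: derivative_eq_intros)
    show "norm (inverse (z \<tau>) * (w - 1) + exprel (- z \<tau> * of_real t) * (- (w - 1) * of_real t)) \<le> K"
      unfolding K_def by (rule norm_Ei0_rotation_derivative_le[OF Rz m t])
  qed simp
  moreover have "f 1 - f 0 = Ln w + Ei0 (- w * of_real t) - Ei0 (- of_real t)"
    by (simp add: f_def z_def)
  ultimately show ?thesis by (simp add: K_def m_def)
qed

lemma Ei0_scaled_asymptotics:
  assumes w: "Re w > 0"
  shows "((\<lambda>t. - euler_mascheroni - Ln w - of_real (ln t) - Ei0 (- w * of_real t)) \<longlongrightarrow> 0) at_top"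
proof -
  define m where "m = min 1 (Re w)"
  have m: "m > 0" using w by (simp add: m_def)
  define D where "D t = - (Ln w + Ei0 (- w * of_real t) - Ei0 (- of_real t))" for t
  have D: "(D \<longlongrightarrow> 0) at_top"
  proof (rule Lim_null_comparison)
    show "eventually (\<lambda>t. norm (D t) \<le> norm (w - 1) * exp (- t * m) / m) at_top"
      using eventually_gt_at_top[of "0::real"]
      by eventually_elim (simp only: D_def norm_minus_cancel m_def Ei0_rotation_bound[OF w])
    show "((\<lambda>t. norm (w - 1) * exp (- t * m) / m) \<longlongrightarrow> 0) at_top"
      using m by real_asymp
  qed
  have "((\<lambda>t. E1 t + D t) \<longlongrightarrow> 0) at_top" using tendsto_add_zero[OF E1_tendsto_zero D] .
  moreover have "eventually (\<lambda>t. E1 t + D t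
                   = - euler_mascheroni - Ln w - of_real (ln t) - Ei0 (- w * of_real t)) at_top"
    using eventually_gt_at_top[of "0::real"]
    by eventually_elim (simp add: E1_def D_def Ln_of_real)
  ultimately show ?thesis by (simp only: tendsto_cong[symmetric])
qed


section \<open>Integrability criteria and elementary limits\<close>

lemma abs_ln_le:
  assumes t: "(t::real) > 0"
  shows "\<bar>ln t\<bar> \<le> 2 / sqrt t + t"
proof (cases "t \<le> 1")
  case True
  have st: "sqrt t > 0" using t by simp
  have "ln t = 2 * ln (sqrt t)" using t by (simp add: ln_sqrt)
  moreover have "- ln (sqrt t) = ln (1 / sqrt t)" using st by (simp add: ln_div)
  moreover have "ln (1 / sqrt t) \<le> 1 / sqrt t - 1" using st by (intro ln_le_minus_one) auto
  moreover have "ln t \<le> 0" using True t by simp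
  ultimately have "\<bar>ln t\<bar> \<le> 2 / sqrt t" by (simp add: field_simps)
  then show ?thesis using t by simp
next
  case False
  then have "ln t \<le> t - 1" using t by (intro ln_le_minus_one) auto
  moreover have "ln t \<ge> 0" using False by simp
  moreover have "2 / sqrt t \<ge> 0" using t by simp
  ultimately show ?thesis by linarith
qed

text \<open>The logarithmic singularity \<open>ln (ln y)\<close> at \<open>y = 1\<close> is integrable.  By the previous
  lemma it is dominated on \<open>(1,b)\<close> by \<open>b (2/(y \<surd>(ln y)) + ln y / y)\<close>, which has the explicit
  primitive \<open>b (4 \<surd>(ln y) + (ln y)\<^sup>2/2)\<close>.\<close>
lemma set_integrable_ln_ln_majorant:
  assumes b: "b > (1::real)"
  shows "set_integrable lborel {1<..<b} (\<lambda>y. 2 / (sqrt (ln y) * y) + ln y / y)"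
proof -
  define F where "F y = 4 * sqrt (ln y) + (ln y)^2 / 2" for y :: real
  have "set_integrable lborel (einterval (ereal 1) (ereal b)) (\<lambda>y. 2 / (sqrt (ln y) * y) + ln y / y)"
  proof (rule interval_integral_FTC_nonneg(1))
    show "ereal 1 < ereal b" using b by simp
    fix x assume x: "ereal 1 < ereal x" "ereal x < ereal b"
    hence x1: "x > 1" by simp
    hence lx: "ln x > 0" by simp
    show "DERIV F x :> 2 / (sqrt (ln x) * x) + ln x / x"
      unfolding F_def using x1 lx
      by (auto intro!: derivative_eq_intros simp: field_simps power2_eq_square)
    show "isCont (\<lambda>y. 2 / (sqrt (ln y) * y) + ln y / y) x"
      using x1 lx by (intro continuous_intros) auto
  next
    show "AE x in lborel. ereal 1 < ereal x \<longrightarrow> ereal x < ereal b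
            \<longrightarrow> 0 \<le> 2 / (sqrt (ln x) * x) + ln x / x"
      by (intro AE_I2) (auto intro!: add_nonneg_nonneg)
    have "(F \<longlongrightarrow> F 1) (at_right 1)" unfolding F_def
      by (intro tendsto_intros continuous_on_imp_continuous_within) auto
    then show "((F \<circ> real_of_ereal) \<longlongrightarrow> 0) (at_right (ereal 1))"
      by (simp add: ereal_tendsto_simps1 F_def)
    have "(F \<longlongrightarrow> F b) (at_left b)" unfolding F_def using b
      by (intro tendsto_intros) auto
    then show "((F \<circ> real_of_ereal) \<longlongrightarrow> F b) (at_left (ereal b))"
      by (simp add: ereal_tendsto_simps1)
  qed
  then show ?thesis by simp
qed

lemma set_integrable_abs_ln_ln:
  assumes b: "b > (1::real)"
  shows "set_integrable lborel {1<..<b} (\<lambda>y. \<bar>ln (ln y)\<bar>)"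
proof (rule set_integrable_bound)
  show "set_integrable lborel {1<..<b} (\<lambda>y. b * (2 / (sqrt (ln y) * y) + ln y / y))"
    using set_integrable_ln_ln_majorant[OF b] by (rule set_integrable_mult_right)
  show "set_borel_measurable lborel {1<..<b} (\<lambda>y. \<bar>ln (ln y)\<bar>)"
    by (simp add: set_borel_measurable_def)
  show "AE y in lborel. y \<in> {1<..<b} \<longrightarrow> norm \<bar>ln (ln y)\<bar> \<le> norm (b * (2 / (sqrt (ln y) * y) + ln y / y))"
  proof (intro AE_I2 impI)
    fix y assume y: "y \<in> {1<..<b}"
    hence ly: "ln y > 0" by simp
    have "\<bar>ln (ln y)\<bar> \<le> 2 / sqrt (ln y) + ln y" by (rule abs_ln_le[OF ly])
    also have "\<dots> \<le> (b / y) * (2 / sqrt (ln y) + ln y)"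
    proof -
      have "1 \<le> b / y" using y by simp
      from mult_right_mono[OF this, of "2 / sqrt (ln y) + ln y"] ly show ?thesis by simp
    qed
    also have "\<dots> = b * (2 / (sqrt (ln y) * y) + ln y / y)" using y by (simp add: field_simps)
    finally show "norm \<bar>ln (ln y)\<bar> \<le> norm (b * (2 / (sqrt (ln y) * y) + ln y / y))"
      using y ly by simp
  qed
qed

lemma set_integrable_near_one:
  fixes f :: "real \<Rightarrow> complex"
  assumes b: "b > 1" and cont: "continuous_on {1<..<b} f" and AB: "A \<ge> 0" "B \<ge> 0"
    and bound: "\<And>y. 1 < y \<Longrightarrow> y < b \<Longrightarrow> norm (f y) \<le> A + B * \<bar>ln (ln y)\<bar>"
  shows "set_integrable lborel {1<..<b} f"
proof -
  have IA: "set_integrable lborel {1<..<b} (\<lambda>y. A)"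
    by (rule set_integrable_subset[OF borel_integrable_atLeastAtMost'[of 1 b]]) auto
  have IB: "set_integrable lborel {1<..<b} (\<lambda>y. B * \<bar>ln (ln y)\<bar>)"
    using set_integrable_abs_ln_ln[OF b] by (rule set_integrable_mult_right)
  show ?thesis
  proof (rule set_integrable_bound[OF set_integral_add(1)[OF IA IB]])
    show "set_borel_measurable lborel {1<..<b} f"
      using set_measurable_continuous_on[OF _ cont] unfolding set_borel_measurable_def by simp
    show "AE x in lborel. x \<in> {1<..<b} \<longrightarrow> norm (f x) \<le> norm (A + B * \<bar>ln (ln x)\<bar>)"
      using bound AB by (intro AE_I2) auto
  qed
qed

lemma set_integrable_powr_tail:
  fixes f :: "real \<Rightarrow> complex"
  assumes a: "a > 0" and eta: "\<eta> > 0" and cont: "continuous_on {a<..} f"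
    and bound: "\<And>y. a < y \<Longrightarrow> norm (f y) \<le> C * y powr (-1 - \<eta>)"
  shows "set_integrable lborel {a<..} f"
proof -
  define F where "F y = - (y powr (- \<eta>)) / \<eta>" for y :: real
  have "set_integrable lborel (einterval (ereal a) \<infinity>) (\<lambda>y. y powr (-1 - \<eta>))"
  proof (rule interval_integral_FTC_nonneg(1))
    show "ereal a < \<infinity>" by simp
    fix x assume x: "ereal a < ereal x" "ereal x < \<infinity>"
    hence x0: "x > 0" using a by simp
    show "DERIV F x :> x powr (-1 - \<eta>)"
      unfolding F_def using x0 eta
      by (auto intro!: derivative_eq_intros simp: field_simps powr_diff powr_minus)
    show "isCont (\<lambda>y. y powr (-1 - \<eta>)) x" using x0 by (intro continuous_intros) auto
  next
    show "AE x in lborel. ereal a < ereal x \<longrightarrow> ereal x < \<infinity> \<longrightarrow> 0 \<le> x powr (-1 - \<eta>)"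
      by (intro AE_I2) auto
    have "(F \<longlongrightarrow> F a) (at_right a)" unfolding F_def using a eta
      by (intro tendsto_intros) auto
    then show "((F \<circ> real_of_ereal) \<longlongrightarrow> F a) (at_right (ereal a))"
      by (simp add: ereal_tendsto_simps1)
    have "(F \<longlongrightarrow> 0) at_top" unfolding F_def using eta by real_asymp
    then show "((F \<circ> real_of_ereal) \<longlongrightarrow> 0) (at_left \<infinity>)"
      by (simp add: ereal_tendsto_simps1)
  qed
  then have I: "set_integrable lborel {a<..} (\<lambda>y. C * y powr (-1 - \<eta>))"
    by (intro set_integrable_mult_right) simp
  show ?thesis
  proof (rule set_integrable_bound[OF I])
    show "set_borel_measurable lborel {a<..} f"
      using set_measurable_continuous_on[OF _ cont] unfolding set_borel_measurable_def by simp
    show "AE x in lborel. x \<in> {a<..} \<longrightarrow> norm (f x) \<le> norm (C * x powr (-1 - \<eta>))"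
      using bound by (intro AE_I2) (auto intro: order_trans[OF _ abs_ge_self])
  qed
qed

lemma tendsto_log_exp_decay: "a < (0::real) \<Longrightarrow> ((\<lambda>t. (K + \<bar>ln t\<bar>) * exp (a * t)) \<longlongrightarrow> 0) at_top"
  by real_asymp

lemma tendsto_exp_decay: "a < (0::real) \<Longrightarrow> ((\<lambda>t. K * exp (a * t)) \<longlongrightarrow> 0) at_top"
  by real_asymp

lemma isCont_of_real_comp:
  assumes "(f has_field_derivative D) (at (complex_of_real y))"
  shows "isCont (\<lambda>y. f (complex_of_real y)) y"
proof -
  have "isCont complex_of_real y" by (intro continuous_intros)
  from isCont_o2[OF this DERIV_isCont[OF assms]] show ?thesis .
qed


section \<open>The integral of \<open>\<Phi>\<^sub>\<alpha>(x)/x^(s+1)\<close>\<close>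

locale Phi_integral =
  fixes \<alpha> s :: complex
  assumes alpha_not_nonneg_real: "\<alpha> \<notin> complex_of_real ` {0..}"
    and Re_alpha_pos: "Re \<alpha> > 0"
    and Re_s_gt_one: "Re s > 1"
    and Re_s_gt_Re_alpha: "Re s > Re \<alpha>"
begin

text \<open>The exponent \<open>w = s - \<alpha>\<close> of the error term \<open>E\<close>, and the elementary consequences of
  the hypotheses that are used below (\<open>\<alpha> \<noteq> 1\<close> is where \<open>\<alpha> \<notin> [0,\<infinity>)\<close> enters).\<close>
definition w :: complex where "w = s - \<alpha>"

lemma alpha_nonzero: "\<alpha> \<noteq> 0" using Re_alpha_pos by auto
lemma alpha_ne_one: "\<alpha> \<noteq> 1"
  using alpha_not_nonneg_real by (metis atLeast_iff image_eqI of_real_1 zero_le_one)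
lemma s_nonzero: "s \<noteq> 0" using Re_s_gt_one by auto
lemma one_minus_s_nonzero: "1 - s \<noteq> 0" using Re_s_gt_one by auto
lemma Re_w_pos: "Re w > 0" using Re_s_gt_Re_alpha by (simp add: w_def)

text \<open>The holomorphic extension of \<open>\<phi>\<^sub>\<alpha>\<close> and the antiderivatives described in the
  introduction; \<open>Q1\<close> and \<open>P1\<close> are the limits of \<open>Q\<close> and \<open>P\<close> at \<open>1\<^sup>+\<close>.\<close>
definition phi_ext :: "complex \<Rightarrow> complex" where
  "phi_ext z = euler_mascheroni + Ln (Ln z) + Ln (- \<alpha>) + Ei0 (\<alpha> * Ln z)"
definition Q :: "complex \<Rightarrow> complex" where
  "Q z = - phi_ext z / z + Ln (Ln z) + Ei0 ((\<alpha> - 1) * Ln z)"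
definition Q1 :: complex where
  "Q1 = - (euler_mascheroni + Ln (- \<alpha>))"
definition E :: "complex \<Rightarrow> complex" where
  "E z = - euler_mascheroni - Ln w - Ln (Ln z) - Ei0 (- w * Ln z)"
definition P :: "complex \<Rightarrow> complex" where
  "P z = - (phi_ext z * exp (- s * Ln z) + E z) / s"
definition P1 :: complex where
  "P1 = - (Ln (- \<alpha>) - Ln w) / s"
definition H :: "complex \<Rightarrow> complex" where
  "H z = ((Q z - Q1) * exp ((1 - s) * Ln z) - P z) / (1 - s)"

context
  fixes z :: complex
  assumes z: "z \<notin> \<real>\<^sub>\<le>\<^sub>0" "Ln z \<notin> \<real>\<^sub>\<le>\<^sub>0"
begin

lemma z_nonzero: "z \<noteq> 0" using z by auto
lemma Ln_z_nonzero: "Ln z \<noteq> 0" using z by auto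

lemma has_field_derivative_Ln_z: "(Ln has_field_derivative inverse z) (at z)"
  by (rule has_field_derivative_Ln[OF z(1)])

lemma has_field_derivative_Ln_Ln:
  "((\<lambda>z. Ln (Ln z)) has_field_derivative inverse (Ln z) * inverse z) (at z)"
  by (rule DERIV_chain2[OF has_field_derivative_Ln[OF z(2)] has_field_derivative_Ln_z])

lemma has_field_derivative_Ei0_Ln:
  "((\<lambda>z. Ei0 (c * Ln z)) has_field_derivative exprel (c * Ln z) * (c * inverse z)) (at z)"
  by (rule Ei0_has_field_derivative_chain[OF DERIV_cmult[OF has_field_derivative_Ln_z]])

lemma has_field_derivative_exp_Ln:
  "((\<lambda>z. exp (c * Ln z)) has_field_derivative exp (c * Ln z) * (c * inverse z)) (at z)"
  by (rule DERIV_chain2[OF DERIV_exp DERIV_cmult[OF has_field_derivative_Ln_z]])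

text \<open>\<open>\<phi>'(z) = z^(\<alpha>-1) / Ln z\<close>: the \<open>Ln (Ln z)\<close> term cancels the constant part of \<open>Ei0'\<close>.\<close>
lemma phi_ext_deriv: "(phi_ext has_field_derivative exp (\<alpha> * Ln z) / (Ln z * z)) (at z)"
proof -
  have "(phi_ext has_field_derivative
          (inverse (Ln z) * inverse z + exprel (\<alpha> * Ln z) * (\<alpha> * inverse z))) (at z)"
    unfolding phi_ext_def[abs_def] using z by (auto intro!: derivative_eq_intros)
  moreover have "inverse (Ln z) * inverse z + exprel (\<alpha> * Ln z) * (\<alpha> * inverse z)
                 = exp (\<alpha> * Ln z) / (Ln z * z)"
    using exprel_mult[of "\<alpha> * Ln z"] z_nonzero Ln_z_nonzero by (simp add: field_simps)
  ultimately show ?thesis by simp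
qed

lemma Q_deriv: "(Q has_field_derivative phi_ext z / z^2) (at z)"
proof -
  have d1: "((\<lambda>z. - phi_ext z / z) has_field_derivative
      ((- (exp (\<alpha> * Ln z) / (Ln z * z))) * z - (- phi_ext z) * 1) / (z * z)) (at z)"
    by (rule DERIV_divide[OF DERIV_minus[OF phi_ext_deriv] DERIV_ident z_nonzero])
  have d: "(Q has_field_derivative
      ((- (exp (\<alpha> * Ln z) / (Ln z * z))) * z - (- phi_ext z) * 1) / (z * z)
      + inverse (Ln z) * inverse z + exprel ((\<alpha> - 1) * Ln z) * ((\<alpha> - 1) * inverse z)) (at z)"
    unfolding Q_def[abs_def] by (intro DERIV_add d1 has_field_derivative_Ln_Ln has_field_derivative_Ei0_Ln)
  have nz: "(\<alpha> - 1) * Ln z \<noteq> 0" using alpha_ne_one Ln_z_nonzero by simp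
  have e1: "exp ((\<alpha> - 1) * Ln z) = exp (\<alpha> * Ln z) / z"
    using z_nonzero by (simp add: algebra_simps exp_diff)
  have ed1: "exprel ((\<alpha> - 1) * Ln z) = (exp (\<alpha> * Ln z) / z - 1) / ((\<alpha> - 1) * Ln z)"
    unfolding exprel_eq[OF nz] e1 ..
  show ?thesis
    by (rule DERIV_cong[OF d], unfold ed1)
       (use z_nonzero Ln_z_nonzero alpha_ne_one in \<open>simp add: field_simps power2_eq_square\<close>)
qed

lemma P_deriv: "(P has_field_derivative phi_ext z * exp (- s * Ln z) / z) (at z)"
proof -
  have dE: "(E has_field_derivative
      0 - 0 - inverse (Ln z) * inverse z - exprel (- w * Ln z) * (- w * inverse z)) (at z)"
    unfolding E_def[abs_def]
    by (intro DERIV_diff DERIV_const has_field_derivative_Ln_Ln has_field_derivative_Ei0_Ln)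
  have d: "(P has_field_derivative - (exp (\<alpha> * Ln z) / (Ln z * z) * exp (- s * Ln z)
      + exp (- s * Ln z) * (- s * inverse z) * phi_ext z
      + (0 - 0 - inverse (Ln z) * inverse z - exprel (- w * Ln z) * (- w * inverse z))) / s) (at z)"
    unfolding P_def[abs_def]
    by (intro DERIV_cdivide DERIV_minus DERIV_add DERIV_mult phi_ext_deriv has_field_derivative_exp_Ln dE)
  have nz: "- w * Ln z \<noteq> 0" using Re_w_pos Ln_z_nonzero by auto
  have e1: "exp (- w * Ln z) = exp (\<alpha> * Ln z) * exp (- s * Ln z)"
    by (simp add: w_def algebra_simps flip: exp_add)
  have ed1: "exprel (- w * Ln z) = (exp (\<alpha> * Ln z) * exp (- s * Ln z) - 1) / (- w * Ln z)"
    unfolding exprel_eq[OF nz] e1 ..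
  show ?thesis
    by (rule DERIV_cong[OF d], unfold ed1)
       (use z_nonzero Ln_z_nonzero s_nonzero nz in \<open>simp add: field_simps\<close>)
qed

text \<open>Hence, integrating by parts, \<open>H\<close> is an antiderivative of \<open>(Q(z) - Q1) z^(-s)\<close>.\<close>
lemma H_deriv: "(H has_field_derivative (Q z - Q1) * exp (- s * Ln z)) (at z)"
proof -
  have d: "(H has_field_derivative ((phi_ext z / z^2 - 0) * exp ((1 - s) * Ln z)
      + exp ((1 - s) * Ln z) * ((1 - s) * inverse z) * (Q z - Q1)
      - phi_ext z * exp (- s * Ln z) / z) / (1 - s)) (at z)"
    unfolding H_def[abs_def]
    by (intro DERIV_cdivide DERIV_diff DERIV_mult DERIV_const Q_deriv has_field_derivative_exp_Ln P_deriv)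
  have e1: "exp ((1 - s) * Ln z) = z * exp (- s * Ln z)"
    using z_nonzero by (simp add: algebra_simps exp_diff exp_minus field_simps)
  show ?thesis
    by (rule DERIV_cong[OF d], unfold e1)
       (use z_nonzero Ln_z_nonzero one_minus_s_nonzero in \<open>simp add: field_simps power2_eq_square\<close>)
qed

end

lemma Ln_of_real_gt_one: "1 < x \<Longrightarrow> Ln (complex_of_real x) = of_real (ln x)"
  by (simp add: Ln_of_real)

lemma Ln_of_real_ln: "1 < x \<Longrightarrow> Ln (complex_of_real (ln x)) = of_real (ln (ln x))"
  by (rule Ln_of_real) simp

lemma of_real_in_slit_domain:
  assumes "1 < x"
  shows "complex_of_real x \<notin> \<real>\<^sub>\<le>\<^sub>0" "Ln (complex_of_real x) \<notin> \<real>\<^sub>\<le>\<^sub>0"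
  using assms by (auto simp: Ln_of_real_gt_one complex_nonpos_Reals_iff)

lemma phi_eq_phi_ext: "1 < x \<Longrightarrow> phi \<alpha> x = phi_ext (of_real x)"
  by (simp add: phi_def phi_ext_def Ln_of_real_gt_one)

lemma phi_ext_of_real: "1 < y \<Longrightarrow> phi_ext (of_real y)
    = euler_mascheroni + of_real (ln (ln y)) + Ln (- \<alpha>) + Ei0 (\<alpha> * of_real (ln y))"
  by (simp add: phi_ext_def Ln_of_real_gt_one Ln_of_real_ln)

lemma Q_of_real: "1 < y \<Longrightarrow> Q (of_real y)
    = - phi_ext (of_real y) / of_real y + of_real (ln (ln y)) + Ei0 ((\<alpha> - 1) * of_real (ln y))"
  by (simp add: Q_def Ln_of_real_gt_one Ln_of_real_ln)

lemma norm_exp_Ln_of_real: "1 < y \<Longrightarrow> norm (exp (c * Ln (complex_of_real y))) = exp (Re c * ln y)"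
  by (simp add: Ln_of_real_gt_one norm_exp_eq_Re)

lemma isCont_phi: "1 < y \<Longrightarrow> isCont (phi \<alpha>) y"
  unfolding phi_def[abs_def] by (intro continuous_intros) (auto simp: complex_nonpos_Reals_iff)

text \<open>With the margin \<open>\<delta>\<close> we have \<open>Ei0(\<alpha> t) = O(e^(cA t))\<close> and \<open>Ei0((\<alpha>-1) t) = O(e^(cB t))\<close>,
  and every exponent that occurs in the estimates below remains negative.\<close>
definition \<delta> :: real where "\<delta> = min (Re s - Re \<alpha>) (Re s - 1) / 3"
definition cA :: real where "cA = Re \<alpha> + \<delta>"
definition cB :: real where "cB = max (Re \<alpha> - 1) 0 + \<delta>"
definition MA :: real where "MA = Ei0_ray_const \<alpha> cA"
definition MB :: real where "MB = Ei0_ray_const (\<alpha> - 1) cB"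
definition K0 :: real where "K0 = norm (euler_mascheroni :: complex) + norm (Ln (- \<alpha>))"

lemma \<delta>_pos: "\<delta> > 0" using Re_s_gt_one Re_s_gt_Re_alpha by (simp add: \<delta>_def)
lemma \<delta>_le: "3 * \<delta> \<le> Re s - Re \<alpha>" "3 * \<delta> \<le> Re s - 1" by (simp_all add: \<delta>_def)
lemma cA_pos: "cA > 0" using Re_alpha_pos \<delta>_pos by (simp add: cA_def)
lemma cB_pos: "cB > 0" using \<delta>_pos by (simp add: cB_def)
lemma MA_nonneg: "MA \<ge> 0" using cA_pos by (simp add: MA_def Ei0_ray_const_nonneg)
lemma MB_nonneg: "MB \<ge> 0" using cB_pos by (simp add: MB_def Ei0_ray_const_nonneg)

lemma norm_Ei0_alpha_le: "t \<ge> 0 \<Longrightarrow> norm (Ei0 (\<alpha> * of_real t)) \<le> MA * exp (cA * t)"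
  unfolding MA_def using \<delta>_pos cA_pos by (intro norm_Ei0_ray_le) (auto simp: cA_def)

lemma norm_Ei0_alpha_minus_one_le: "t \<ge> 0 \<Longrightarrow> norm (Ei0 ((\<alpha> - 1) * of_real t)) \<le> MB * exp (cB * t)"
  unfolding MB_def using \<delta>_pos cB_pos by (intro norm_Ei0_ray_le) (auto simp: cB_def)

lemma phi_ext_bound:
  assumes y: "1 < y"
  shows "norm (phi_ext (of_real y)) \<le> K0 + \<bar>ln (ln y)\<bar> + MA * exp (cA * ln y)"
proof -
  have "norm (phi_ext (of_real y)) \<le> norm (euler_mascheroni :: complex) + norm (of_real (ln (ln y)) :: complex)
          + norm (Ln (- \<alpha>)) + norm (Ei0 (\<alpha> * of_real (ln y)))"
    unfolding phi_ext_of_real[OF y] by (intro norm_triangle_le add_mono order_refl norm_triangle_ineq)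
  also have "\<dots> \<le> norm (euler_mascheroni :: complex) + \<bar>ln (ln y)\<bar> + norm (Ln (- \<alpha>)) + MA * exp (cA * ln y)"
    using norm_Ei0_alpha_le[of "ln y"] y by simp
  finally show ?thesis by (simp add: K0_def)
qed

text \<open>A majorant of \<open>|Q(e\<^sup>t) - Q1|\<close>.\<close>
definition Q_bound :: "real \<Rightarrow> real" where
  "Q_bound t = (K0 + \<bar>ln t\<bar> + MA * exp (cA * t)) * exp (- t) + \<bar>ln t\<bar> + MB * exp (cB * t) + norm Q1"

lemma Q_bound_nonneg: "Q_bound t \<ge> 0"
  using MA_nonneg MB_nonneg by (simp add: Q_bound_def K0_def)

lemma norm_Q_minus_Q1_le:
  assumes y: "1 < y"
  shows "norm (Q (of_real y) - Q1) \<le> Q_bound (ln y)"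
proof -
  have "norm (Q (of_real y) - Q1) \<le> norm (phi_ext (of_real y) / of_real y) + norm (of_real (ln (ln y)) :: complex)
          + norm (Ei0 ((\<alpha> - 1) * of_real (ln y))) + norm Q1"
    unfolding Q_of_real[OF y]
    by (rule order_trans[OF norm_triangle_ineq4], intro add_mono order_refl order_trans[OF norm_triangle_ineq])
       (auto intro: order_trans[OF norm_triangle_ineq])
  also have "norm (phi_ext (of_real y) / of_real y) = norm (phi_ext (of_real y)) * exp (- ln y)"
    using y by (simp add: norm_mult norm_inverse exp_minus divide_inverse)
  also have "\<dots> \<le> (K0 + \<bar>ln (ln y)\<bar> + MA * exp (cA * ln y)) * exp (- ln y)"
    by (intro mult_right_mono phi_ext_bound y) auto
  also have "norm (Ei0 ((\<alpha> - 1) * of_real (ln y))) \<le> MB * exp (cB * ln y)"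
    using norm_Ei0_alpha_minus_one_le[of "ln y"] y by simp
  finally show ?thesis by (simp add: Q_bound_def)
qed

lemma Q_bound_le_log:
  assumes "0 < t" "t \<le> T"
  shows "Q_bound t \<le> (K0 + MA * exp (cA * T) + MB * exp (cB * T) + norm Q1) + 2 * \<bar>ln t\<bar>"
proof -
  have e: "exp (- t) \<le> 1" using assms by simp
  have n: "0 \<le> K0 + \<bar>ln t\<bar> + MA * exp (cA * t)" using MA_nonneg by (simp add: K0_def)
  have "(K0 + \<bar>ln t\<bar> + MA * exp (cA * t)) * exp (- t) \<le> K0 + \<bar>ln t\<bar> + MA * exp (cA * t)"
    using mult_left_mono[OF e n] by simp
  moreover have "MA * exp (cA * t) \<le> MA * exp (cA * T)"
    using assms MA_nonneg cA_pos by (intro mult_left_mono) auto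
  moreover have "MB * exp (cB * t) \<le> MB * exp (cB * T)"
    using assms MB_nonneg cB_pos by (intro mult_left_mono) auto
  ultimately show ?thesis unfolding Q_bound_def by linarith
qed

lemma Q_bound_decay: "((\<lambda>t. Q_bound t * exp ((1 + \<delta> - Re s) * t)) \<longlongrightarrow> 0) at_top"
proof -
  define b where "b = 1 + \<delta> - Re s"
  have neg: "b - 1 < 0" "cA - 1 + b < 0" "b < 0" "cB + b < 0"
    using \<delta>_pos \<delta>_le by (auto simp: b_def cA_def cB_def max_def)
  have eq: "Q_bound t * exp (b * t) = (K0 + \<bar>ln t\<bar>) * exp ((b - 1) * t) + MA * exp ((cA - 1 + b) * t)
            + (norm Q1 + \<bar>ln t\<bar>) * exp (b * t) + MB * exp ((cB + b) * t)" for t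
  proof -
    have f1: "exp ((b - 1) * t) = exp (- t) * exp (b * t)" by (simp add: algebra_simps flip: exp_add)
    have f2: "exp ((cA - 1 + b) * t) = exp (cA * t) * exp (- t) * exp (b * t)"
      by (simp add: algebra_simps flip: exp_add)
    have f3: "exp ((cB + b) * t) = exp (cB * t) * exp (b * t)" by (simp add: algebra_simps flip: exp_add)
    show ?thesis unfolding f1 f2 f3 Q_bound_def by (simp add: algebra_simps)
  qed
  have "((\<lambda>t. (K0 + \<bar>ln t\<bar>) * exp ((b - 1) * t) + MA * exp ((cA - 1 + b) * t)
            + (norm Q1 + \<bar>ln t\<bar>) * exp (b * t) + MB * exp ((cB + b) * t)) \<longlongrightarrow> 0 + 0 + 0 + 0) at_top"
    by (intro tendsto_add tendsto_log_exp_decay tendsto_exp_decay neg)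
  then show ?thesis unfolding b_def[symmetric] eq by simp
qed

text \<open>The bound for \<open>\<phi>\<close> is beaten by \<open>y^(-Re s)\<close>, since \<open>cA < Re s\<close>.\<close>
lemma phi_ext_bound_decay:
  "((\<lambda>t. (K0 + \<bar>ln t\<bar> + MA * exp (cA * t)) * exp (- Re s * t)) \<longlongrightarrow> 0) at_top"
proof -
  have neg: "- Re s < 0" "cA - Re s < 0" using Re_s_gt_one \<delta>_pos \<delta>_le by (auto simp: cA_def)
  have eq: "(K0 + \<bar>ln t\<bar> + MA * exp (cA * t)) * exp (- Re s * t)
            = (K0 + \<bar>ln t\<bar>) * exp (- Re s * t) + MA * exp ((cA - Re s) * t)" for t
  proof -
    have f: "exp ((cA - Re s) * t) = exp (cA * t) * exp (- Re s * t)" by (simp add: algebra_simps flip: exp_add)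
    show ?thesis unfolding f by (simp add: algebra_simps)
  qed
  have "((\<lambda>t. (K0 + \<bar>ln t\<bar>) * exp (- Re s * t) + MA * exp ((cA - Re s) * t)) \<longlongrightarrow> 0 + 0) at_top"
    by (intro tendsto_add tendsto_log_exp_decay tendsto_exp_decay neg)
  then show ?thesis unfolding eq by simp
qed

text \<open>The integrand of the theorem, in terms of \<open>Q\<close> (see \<open>Phi_over_power_eq\<close> below).\<close>
definition integrand :: "real \<Rightarrow> complex" where
  "integrand y = (Q (of_real y) - Q1) * exp (- s * Ln (of_real y))"

lemma integrand_tail_bound: "eventually (\<lambda>y. norm (integrand y) \<le> 1 * y powr (-1 - \<delta>)) at_top"
proof -
  have "eventually (\<lambda>y. Q_bound (ln y) * exp ((1 + \<delta> - Re s) * ln y) < 1) at_top"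
    using filterlim_compose[OF Q_bound_decay ln_at_top] by (rule order_tendstoD) simp
  then show ?thesis using eventually_gt_at_top[of "1::real"]
  proof eventually_elim
    case (elim y)
    have "norm (integrand y) \<le> Q_bound (ln y) * exp (- Re s * ln y)"
      unfolding integrand_def norm_mult norm_exp_Ln_of_real[OF elim(2)] uminus_complex.sel
      by (intro mult_right_mono norm_Q_minus_Q1_le elim) auto
    also have "\<dots> = Q_bound (ln y) * exp ((1 + \<delta> - Re s) * ln y) * exp ((-1 - \<delta>) * ln y)"
      by (simp add: algebra_simps flip: exp_add)
    also have "\<dots> \<le> 1 * exp ((-1 - \<delta>) * ln y)"
      using elim by (intro mult_right_mono) auto
    also have "exp ((-1 - \<delta>) * ln y) = y powr (-1 - \<delta>)"
      using elim by (simp add: powr_def)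
    finally show ?case .
  qed
qed

text \<open>\<open>P(y) \<rightarrow> 0\<close> as \<open>y \<rightarrow> \<infinity>\<close>: the \<open>\<phi>\<close> part decays, and \<open>E \<rightarrow> 0\<close> by the exponential-integral
  asymptotics applied with \<open>t = ln y\<close>.\<close>
lemma P_tendsto_zero: "((\<lambda>y. P (of_real y)) \<longlongrightarrow> 0) at_top"
proof -
  have phi_part: "((\<lambda>y. phi_ext (of_real y) * exp (- s * Ln (of_real y))) \<longlongrightarrow> 0) at_top"
  proof (rule Lim_null_comparison)
    show "((\<lambda>y. (K0 + \<bar>ln (ln y)\<bar> + MA * exp (cA * ln y)) * exp (- Re s * ln y)) \<longlongrightarrow> 0) at_top"
      using filterlim_compose[OF phi_ext_bound_decay ln_at_top] by simp
    show "eventually (\<lambda>y. norm (phi_ext (of_real y) * exp (- s * Ln (of_real y)))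
            \<le> (K0 + \<bar>ln (ln y)\<bar> + MA * exp (cA * ln y)) * exp (- Re s * ln y)) at_top"
      using eventually_gt_at_top[of "1::real"]
    proof eventually_elim
      case (elim y)
      show ?case unfolding norm_mult norm_exp_Ln_of_real[OF elim] uminus_complex.sel
        by (intro mult_right_mono phi_ext_bound elim) auto
    qed
  qed
  have E_part: "((\<lambda>y. E (of_real y)) \<longlongrightarrow> 0) at_top"
  proof -
    have "((\<lambda>y. - euler_mascheroni - Ln w - of_real (ln (ln y)) - Ei0 (- w * of_real (ln y))) \<longlongrightarrow> 0) at_top"
      using filterlim_compose[OF Ei0_scaled_asymptotics[OF Re_w_pos] ln_at_top] by simp
    moreover have "eventually (\<lambda>y. - euler_mascheroni - Ln w - of_real (ln (ln y)) - Ei0 (- w * of_real (ln y))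
                     = E (of_real y)) at_top"
      using eventually_gt_at_top[of "1::real"]
      by eventually_elim (simp add: E_def Ln_of_real_gt_one Ln_of_real_ln)
    ultimately show ?thesis by (simp only: tendsto_cong)
  qed
  have "((\<lambda>y. - (phi_ext (of_real y) * exp (- s * Ln (of_real y)) + E (of_real y)) / s) \<longlongrightarrow> - (0 + 0) / s) at_top"
    using s_nonzero by (intro tendsto_intros phi_part E_part)
  then show ?thesis by (simp add: P_def)
qed

lemma H_tendsto_zero: "((\<lambda>y. H (of_real y)) \<longlongrightarrow> 0) at_top"
proof -
  have Q_part: "((\<lambda>y. (Q (of_real y) - Q1) * exp ((1 - s) * Ln (of_real y))) \<longlongrightarrow> 0) at_top"
  proof (rule Lim_null_comparison)
    show "((\<lambda>y. Q_bound (ln y) * exp ((1 + \<delta> - Re s) * ln y)) \<longlongrightarrow> 0) at_top"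
      using filterlim_compose[OF Q_bound_decay ln_at_top] by simp
    show "eventually (\<lambda>y. norm ((Q (of_real y) - Q1) * exp ((1 - s) * Ln (of_real y)))
            \<le> Q_bound (ln y) * exp ((1 + \<delta> - Re s) * ln y)) at_top"
      using eventually_gt_at_top[of "1::real"]
    proof eventually_elim
      case (elim y)
      have "exp ((1 - Re s) * ln y) \<le> exp ((1 + \<delta> - Re s) * ln y)"
        using elim \<delta>_pos by (simp add: mult_right_mono)
      then show ?case unfolding norm_mult norm_exp_Ln_of_real[OF elim] uminus_complex.sel
        by (intro mult_mono norm_Q_minus_Q1_le elim Q_bound_nonneg) auto
    qed
  qed
  have "((\<lambda>y. ((Q (of_real y) - Q1) * exp ((1 - s) * Ln (of_real y)) - P (of_real y)) / (1 - s))
          \<longlongrightarrow> (0 - 0) / (1 - s)) at_top"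
    using one_minus_s_nonzero by (intro tendsto_intros Q_part P_tendsto_zero)
  then show ?thesis by (simp add: H_def[abs_def])
qed

text \<open>As \<open>y \<rightarrow> 1\<^sup>+\<close>, the singular terms \<open>ln (ln y)\<close> of \<open>-\<phi>(y)/y\<close> and of \<open>Q\<close> cancel up to
  \<open>ln (ln y) (1 - 1/y) \<rightarrow> 0\<close>.\<close>
lemma Q_tendsto_Q1: "((\<lambda>y. Q (of_real y)) \<longlongrightarrow> Q1) (at_right 1)"
proof -
  define R where "R y = - (euler_mascheroni + Ln (- \<alpha>) + Ei0 (\<alpha> * of_real (ln y))) / of_real y
                        + Ei0 ((\<alpha> - 1) * of_real (ln y))" for y :: real
  have lnln: "((\<lambda>y::real. ln (ln y) * (1 - 1 / y)) \<longlongrightarrow> 0) (at_right 1)"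
    by real_asymp
  have "((\<lambda>y. of_real (ln (ln y) * (1 - 1 / y)) + R y) \<longlongrightarrow> of_real 0 + (- (euler_mascheroni + Ln (- \<alpha>)
          + Ei0 (\<alpha> * of_real (ln 1))) / of_real 1 + Ei0 ((\<alpha> - 1) * of_real (ln 1)))) (at_right 1)"
    unfolding R_def
    by (intro tendsto_intros lnln continuous_on_imp_continuous_within[where s = "{0<..}"])
       (auto intro!: continuous_intros)
  moreover have "eventually (\<lambda>y. of_real (ln (ln y) * (1 - 1 / y)) + R y = Q (of_real y)) (at_right 1)"
    using eventually_at_right_less
    by eventually_elim (simp add: R_def Q_of_real phi_ext_of_real field_simps)
  ultimately show ?thesis by (simp add: tendsto_cong Q1_def)
qed

text \<open>Similarly for \<open>P\<close>, where the singular part is \<open>ln (ln y) (y^(-s) - 1) \<rightarrow> 0\<close>.\<close>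
lemma P_tendsto_P1: "((\<lambda>y. P (of_real y)) \<longlongrightarrow> P1) (at_right 1)"
proof -
  define R where "R y = (euler_mascheroni + Ln (- \<alpha>) + Ei0 (\<alpha> * of_real (ln y))) * exp (- s * of_real (ln y))
                        - euler_mascheroni - Ln w - Ei0 (- w * of_real (ln y))" for y :: real
  define T where "T y = of_real (ln (ln y)) * (exp (- s * of_real (ln y)) - 1)" for y :: real
  have T: "(T \<longlongrightarrow> 0) (at_right 1)"
  proof (rule Lim_null_comparison)
    have "norm s > 0" using s_nonzero by simp
    then show "((\<lambda>y::real. \<bar>ln (ln y)\<bar> * (norm s * ln y * exp (norm s * ln y))) \<longlongrightarrow> 0) (at_right 1)"
      by real_asymp
    show "eventually (\<lambda>y. norm (T y) \<le> \<bar>ln (ln y)\<bar> * (norm s * ln y * exp (norm s * ln y))) (at_right 1)"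
      using eventually_at_right_less
    proof eventually_elim
      case (elim y)
      have "norm (exp (- s * of_real (ln y)) - 1)
              \<le> norm (- s * of_real (ln y)) * exp (norm (- s * of_real (ln y)))"
        by (rule norm_exp_minus_one_le)
      also have "norm (- s * of_real (ln y)) = norm s * ln y" using elim by (simp add: norm_mult)
      finally show ?case unfolding T_def norm_mult norm_of_real by (rule mult_left_mono) auto
    qed
  qed
  have "(R \<longlongrightarrow> (euler_mascheroni + Ln (- \<alpha>) + Ei0 (\<alpha> * of_real (ln 1))) * exp (- s * of_real (ln 1))
                - euler_mascheroni - Ln w - Ei0 (- w * of_real (ln 1))) (at_right 1)"
    unfolding R_def
    by (intro tendsto_intros continuous_on_imp_continuous_within[where s = "{0<..}"])
       (auto intro!: continuous_intros)
  then have "((\<lambda>y. - (T y + R y) / s) \<longlongrightarrow> - (0 + (Ln (- \<alpha>) - Ln w)) / s) (at_right 1)"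
    using s_nonzero by (intro tendsto_intros T) simp
  moreover have "eventually (\<lambda>y. - (T y + R y) / s = P (of_real y)) (at_right 1)"
    using eventually_at_right_less
    by eventually_elim
       (simp add: R_def T_def P_def E_def phi_ext_of_real Ln_of_real_gt_one Ln_of_real_ln algebra_simps)
  ultimately show ?thesis by (simp add: tendsto_cong P1_def)
qed

lemma H_tendsto_at_one: "((\<lambda>y. H (of_real y)) \<longlongrightarrow> - P1 / (1 - s)) (at_right 1)"
proof -
  have "((\<lambda>y. ((Q (of_real y) - Q1) * exp ((1 - s) * of_real (ln y)) - P (of_real y)) / (1 - s))
          \<longlongrightarrow> ((Q1 - Q1) * exp ((1 - s) * of_real (ln 1)) - P1) / (1 - s)) (at_right 1)"
    using one_minus_s_nonzero
    by (intro tendsto_intros Q_tendsto_Q1 P_tendsto_P1 continuous_on_imp_continuous_within[where s = "{0<..}"])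
       (auto intro!: continuous_intros)
  moreover have "eventually (\<lambda>y. ((Q (of_real y) - Q1) * exp ((1 - s) * of_real (ln y)) - P (of_real y)) / (1 - s)
                   = H (of_real y)) (at_right 1)"
    using eventually_at_right_less by eventually_elim (simp add: H_def Ln_of_real_gt_one)
  ultimately show ?thesis by (simp add: tendsto_cong)
qed

text \<open>\<open>\<phi>\<^sub>\<alpha>(y)/y^2\<close> is integrable on \<open>(1,x)\<close>: only the \<open>ln ln y\<close> singularity at 1 matters.\<close>
lemma phi_over_square_integrable:
  assumes x: "1 < x"
  shows "set_integrable lborel {1<..<x} (\<lambda>y. phi \<alpha> y / of_real (y^2))"
proof (rule set_integrable_near_one[OF x _ _ zero_le_one])
  show "continuous_on {1<..<x} (\<lambda>y. phi \<alpha> y / of_real (y^2))"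
    by (intro continuous_at_imp_continuous_on ballI continuous_intros isCont_phi) auto
  show "0 \<le> K0 + MA * exp (cA * ln x)" using MA_nonneg by (simp add: K0_def)
  fix y assume y: "1 < y" "y < x"
  have "norm (phi \<alpha> y / of_real (y^2)) = norm (phi_ext (of_real y)) / y^2"
    using y by (simp add: phi_eq_phi_ext norm_divide norm_power)
  also have "\<dots> \<le> norm (phi_ext (of_real y))"
    using y by (simp add: divide_le_eq one_le_power mult_le_cancel_left1)
  also have "\<dots> \<le> K0 + \<bar>ln (ln y)\<bar> + MA * exp (cA * ln y)" by (rule phi_ext_bound[OF y(1)])
  also have "MA * exp (cA * ln y) \<le> MA * exp (cA * ln x)"
    using y MA_nonneg cA_pos by (intro mult_left_mono) auto
  finally show "norm (phi \<alpha> y / of_real (y^2)) \<le> K0 + MA * exp (cA * ln x) + 1 * \<bar>ln (ln y)\<bar>"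
    by simp
qed

lemma integral_phi_over_square:
  assumes x: "1 < x"
  shows "(LBINT y:{1<..x}. phi \<alpha> y / of_real (y^2)) = Q (of_real x) - Q1"
proof -
  have "(LBINT y=ereal 1..ereal x. phi \<alpha> y / of_real (y^2)) = Q (of_real x) - Q1"
  proof (rule interval_integral_FTC_integrable[where F = "\<lambda>y. Q (of_real y)"])
    show "ereal 1 < ereal x" using x by simp
    fix y assume "ereal 1 < ereal y" "ereal y < ereal x"
    hence y: "1 < y" "y < x" by auto
    have "((\<lambda>y. Q (of_real y)) has_vector_derivative phi_ext (of_real y) / (of_real y)^2) (at y)"
      by (rule has_vector_derivative_real_field[OF Q_deriv[OF of_real_in_slit_domain[OF y(1)]]])
    then show "((\<lambda>y. Q (of_real y)) has_vector_derivative phi \<alpha> y / of_real (y^2)) (at y)"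
      using y by (simp add: phi_eq_phi_ext)
    show "isCont (\<lambda>y. phi \<alpha> y / of_real (y^2)) y"
      using y by (intro continuous_intros isCont_phi) auto
  next
    show "set_integrable lborel (einterval (ereal 1) (ereal x)) (\<lambda>y. phi \<alpha> y / of_real (y^2))"
      using phi_over_square_integrable[OF x] by simp
    show "(((\<lambda>y. Q (of_real y)) \<circ> real_of_ereal) \<longlongrightarrow> Q1) (at_right (ereal 1))"
      unfolding ereal_tendsto_simps1 by (rule Q_tendsto_Q1)
    have "isCont (\<lambda>y. Q (of_real y)) x"
      by (rule isCont_of_real_comp[OF Q_deriv[OF of_real_in_slit_domain[OF x]]])
    then show "(((\<lambda>y. Q (of_real y)) \<circ> real_of_ereal) \<longlongrightarrow> Q (of_real x)) (at_left (ereal x))"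
      unfolding ereal_tendsto_simps1 using continuous_at_imp_continuous_at_within continuous_within by blast
  qed
  then show ?thesis using x by (simp add: interval_integral_Ioc)
qed

lemma Phi_over_power_eq:
  assumes x: "1 < x"
  shows "Phi \<alpha> x / of_real x powr (s + 1) = integrand x"
proof -
  define L where "L = Ln (complex_of_real x)"
  have xn: "complex_of_real x \<noteq> 0" using x by simp
  have "Phi \<alpha> x = exp L * (Q (of_real x) - Q1)"
    unfolding Phi_def integral_phi_over_square[OF x] L_def using xn by simp
  moreover have "complex_of_real x powr (s + 1) = exp L * exp (s * L)"
    using xn by (simp add: powr_def L_def distrib_right exp_add)
  moreover have "integrand x = (Q (of_real x) - Q1) * inverse (exp (s * L))"
    by (simp add: integrand_def L_def exp_minus)
  ultimately show ?thesis by (simp only:) (simp add: field_simps)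
qed

lemma isCont_integrand: "1 < y \<Longrightarrow> isCont integrand y"
  unfolding integrand_def[abs_def]
  by (intro continuous_intros isCont_of_real_comp[OF Q_deriv[OF of_real_in_slit_domain]])
     (auto simp: complex_nonpos_Reals_iff)

lemma integrand_integrable_near_one:
  assumes X: "X > 0"
  shows "set_integrable lborel {1<..<X+1} integrand"
proof (rule set_integrable_near_one[where B = 2])
  show "1 < X + 1" using X by simp
  show "continuous_on {1<..<X+1} integrand"
    by (intro continuous_at_imp_continuous_on ballI isCont_integrand) auto
  show "0 \<le> K0 + MA * exp (cA * ln (X + 1)) + MB * exp (cB * ln (X + 1)) + norm Q1"
    using MA_nonneg MB_nonneg by (simp add: K0_def)
  fix y assume y: "1 < y" "y < X + 1"
  have "norm (integrand y) = norm (Q (of_real y) - Q1) * exp (- Re s * ln y)"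
    unfolding integrand_def norm_mult norm_exp_Ln_of_real[OF y(1)] by simp
  also have "\<dots> \<le> norm (Q (of_real y) - Q1) * 1"
    using y Re_s_gt_one by (intro mult_left_mono) auto
  also have "\<dots> \<le> Q_bound (ln y)" using norm_Q_minus_Q1_le[OF y(1)] by simp
  also have "\<dots> \<le> (K0 + MA * exp (cA * ln (X + 1)) + MB * exp (cB * ln (X + 1)) + norm Q1) + 2 * \<bar>ln (ln y)\<bar>"
    using y X by (intro Q_bound_le_log) auto
  finally show "norm (integrand y)
      \<le> K0 + MA * exp (cA * ln (X + 1)) + MB * exp (cB * ln (X + 1)) + norm Q1 + 2 * \<bar>ln (ln y)\<bar>" .
qed simp

lemma integrand_integrable: "set_integrable lborel {1<..} integrand"
proof -
  obtain X0 where X0: "\<And>y. y \<ge> X0 \<Longrightarrow> norm (integrand y) \<le> 1 * y powr (-1 - \<delta>)"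
    using integrand_tail_bound unfolding eventually_at_top_linorder by blast
  define X where "X = max X0 2"
  have X: "X \<ge> 2" "\<And>y. y > X \<Longrightarrow> norm (integrand y) \<le> 1 * y powr (-1 - \<delta>)"
    using X0 by (auto simp: X_def)
  have tail: "set_integrable lborel {X<..} integrand"
  proof (rule set_integrable_powr_tail[OF _ \<delta>_pos])
    show "0 < X" using X by simp
    show "continuous_on {X<..} integrand"
      using X by (intro continuous_at_imp_continuous_on ballI isCont_integrand) auto
    show "\<And>y. X < y \<Longrightarrow> norm (integrand y) \<le> 1 * y powr (-1 - \<delta>)" by (rule X(2))
  qed
  have "set_integrable lborel ({1<..<X+1} \<union> {X<..}) integrand"
    using X by (intro set_integrable_Un[OF integrand_integrable_near_one tail]) auto
  moreover have "{1<..<X+1} \<union> {X<..} = {1<..}" using X by auto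
  ultimately show ?thesis by simp
qed

lemma integral_integrand: "(LBINT y:{1<..}. integrand y) = P1 / (1 - s)"
proof -
  have "(LBINT y=ereal 1..\<infinity>. integrand y) = 0 - (- P1 / (1 - s))"
  proof (rule interval_integral_FTC_integrable[where F = "\<lambda>y. H (of_real y)"])
    show "ereal 1 < \<infinity>" by simp
    fix y assume "ereal 1 < ereal y" "ereal y < \<infinity>"
    hence y: "1 < y" by auto
    show "((\<lambda>y. H (of_real y)) has_vector_derivative integrand y) (at y)"
      unfolding integrand_def
      by (rule has_vector_derivative_real_field[OF H_deriv[OF of_real_in_slit_domain[OF y]]])
    show "isCont integrand y" by (rule isCont_integrand[OF y])
  next
    show "set_integrable lborel (einterval (ereal 1) \<infinity>) integrand" using integrand_integrable by simp
    show "(((\<lambda>y. H (of_real y)) \<circ> real_of_ereal) \<longlongrightarrow> - P1 / (1 - s)) (at_right (ereal 1))"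
      unfolding ereal_tendsto_simps1 by (rule H_tendsto_at_one)
    show "(((\<lambda>y. H (of_real y)) \<circ> real_of_ereal) \<longlongrightarrow> 0) (at_left \<infinity>)"
      unfolding ereal_tendsto_simps1 by (rule H_tendsto_zero)
  qed
  then show ?thesis by (simp add: interval_integral_Ioi)
qed

lemma exp_integral_value: "1 - s / \<alpha> = exp (- (s * (s - 1)) * (P1 / (1 - s)))"
proof -
  have w0: "w \<noteq> 0" using Re_w_pos by auto
  have "- (s * (s - 1)) * (P1 / (1 - s)) = Ln w - Ln (- \<alpha>)"
    using s_nonzero one_minus_s_nonzero by (simp add: P1_def field_simps)
  also have "exp \<dots> = w / (- \<alpha>)" using w0 alpha_nonzero by (simp add: exp_diff)
  also have "\<dots> = 1 - s / \<alpha>" using alpha_nonzero by (simp add: w_def field_simps)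
  finally show ?thesis by simp
qed

end

theorem mainTheorem10:
  fixes \<alpha> s :: complex
  assumes "\<alpha> \<notin> complex_of_real ` {0..}"
    and "Re \<alpha> > 0"
    and "Re s > 1"
    and "Re s > Re \<alpha>"
  shows "set_integrable lborel {1<..} (\<lambda>x. Phi \<alpha> x / complex_of_real x powr (s + 1))
    \<and> 1 - s / \<alpha> = exp (- (s * (s - 1)) *
        (LBINT x:{1<..}. Phi \<alpha> x / complex_of_real x powr (s + 1)))"
proof -
  interpret Phi_integral \<alpha> s using assms by unfold_locales
  have eq: "\<And>x. x \<in> {1<..} \<Longrightarrow> Phi \<alpha> x / complex_of_real x powr (s + 1) = integrand x"
    using Phi_over_power_eq by auto
  have "set_integrable lborel {1<..} (\<lambda>x. Phi \<alpha> x / complex_of_real x powr (s + 1))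
        = set_integrable lborel {1<..} integrand"
    by (rule set_integrable_cong) (auto simp: eq)
  moreover have "(LBINT x:{1<..}. Phi \<alpha> x / complex_of_real x powr (s + 1)) = (LBINT x:{1<..}. integrand x)"
    by (rule set_lebesgue_integral_cong) (auto simp: eq)
  ultimately show ?thesis
    using integrand_integrable integral_integrand exp_integral_value by simp
qed

end
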